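(* Consider the single-node stochastic clearing problem described in the context, and assume the incremental bid prices $\Delta\alpha_i^{g,+},\Delta\alpha_i^{g,-},\Delta\alpha_j^{d,+},\Delta\alpha_j^{d,-}$ are all positive. Let $(d_j,g_i,D_j(\cdot),G_i(\cdot))$ be an optimal solution with associated prices $(\pi,\Pi(\cdot))$. Then the price distortion $\mathcal{M}^\pi:=\pi-\mathbb{E}[\Pi(\omega)]$ satisfies $$-\Delta\alpha^+\le\mathcal{M}^\pi\le\Delta\alpha^-,$$ where $\Delta\alpha^+=\min\{\min_{i\in\mathcal{G}}\Delta\alpha_i^{g,+},\min_{j\in\mathcal{D}}\Delta\alpha_j^{d,+}\}$ and $\Delta\alpha^-=\min\{\min_{i\in\mathcal{G}}\Delta\alpha_i^{g,-},\min_{j\in\mathcal{D}}\Delta\alpha_j^{d,-}\}$.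
   Context: Finite nonempty sets of suppliers $\mathcal{G}$ and consumers $\mathcal{D}$; a finite scenario set $\Omega$ with probabilities $p(\omega)>0$, $\sum_\omega p(\omega)=1$, and $\mathbb{E}[Y(\omega)]=\sum_\omega p(\omega)Y(\omega)$. Data: bid prices $\alpha_i^g,\alpha_j^d\ge 0$, incremental bid prices $\Delta\alpha_i^{g,\pm},\Delta\alpha_j^{d,\pm}$, real-time capacities $\bar G_i(\omega),\bar D_j(\omega)\ge 0$. $(x)_+=\max\{x,0\}$, $(x)_-=\max\{-x,0\}$. The single-node stochastic clearing problem is: minimize over free day-ahead variables $g_i,d_j\in\mathbb{R}$ and real-time variables $G_i(\omega),D_j(\omega)$ $$\sum_{i\in\mathcal{G}}\mathbb{E}[\alpha_i^gG_i(\omega)+\Delta\alpha_i^{g,+}(G_i(\omega)-g_i)_++\Delta\alpha_i^{g,-}(G_i(\omega)-g_i)_-]+\sum_{j\in\mathcal{D}}\mathbb{E}[-\alpha_j^dD_j(\omega)+\Delta\alpha_j^{d,+}(D_j(\omega)-d_j)_-+\Delta\alpha_j^{d,-}(D_j(\omega)-d_j)_+]$$ subject to $\sum_i g_i=\sum_j d_j$ (multiplier $\pi$), $\sum_i(G_i(\omega)-g_i)=\sum_j(D_j(\omega)-d_j)$ for each $\omega$ (multiplier $p(\omega)\Pi(\omega)$), $0\le G_i(\omega)\le\bar G_i(\omega)$, $0\le D_j(\omega)\le\bar D_j(\omega)$. "Optimal solution with associated prices $(\pi,\Pi(\cdot))$" means the solution minimizes the partial Lagrange function $\text{objective}-\pi(\sum_ig_i-\sum_jd_j)-\mathbb{E}[\Pi(\omega)(\sum_i(G_i(\omega)-g_i)-\sum_j(D_j(\omega)-d_j))]$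 over all $g_i,d_j\in\mathbb{R}$ and all $G_i(\cdot),D_j(\cdot)$ satisfying the bound constraints. *)

theory Defs
  imports "HOL-Analysis.Analysis"
begin

definition pos_part :: "real \<Rightarrow> real" where "pos_part x = max x 0"
definition neg_part :: "real \<Rightarrow> real" where "neg_part x = max (- x) 0"

definition expect :: "'w set \<Rightarrow> ('w \<Rightarrow> real) \<Rightarrow> ('w \<Rightarrow> real) \<Rightarrow> real" where
  "expect Om p Y = (\<Sum>w\<in>Om. p w * Y w)"

text \<open>Objective of the single-node stochastic clearing problem.
  ag, ad: bid prices; dgp, dgm, ddp, ddm: incremental bid prices.\<close>
definition objective ::
  "'g set \<Rightarrow> 'd set \<Rightarrow> 'w set \<Rightarrow> ('w \<Rightarrow> real) \<Rightarrow>
   ('g \<Rightarrow> real) \<Rightarrow> ('g \<Rightarrow> real) \<Rightarrow> ('g \<Rightarrow> real) \<Rightarrow>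
   ('d \<Rightarrow> real) \<Rightarrow> ('d \<Rightarrow> real) \<Rightarrow> ('d \<Rightarrow> real) \<Rightarrow>
   ('g \<Rightarrow> real) \<Rightarrow> ('d \<Rightarrow> real) \<Rightarrow> ('g \<Rightarrow> 'w \<Rightarrow> real) \<Rightarrow> ('d \<Rightarrow> 'w \<Rightarrow> real) \<Rightarrow> real" where
  "objective Gs Ds Om p ag dgp dgm ad ddp ddm g d G D =
     (\<Sum>i\<in>Gs. expect Om p (\<lambda>w. ag i * G i w + dgp i * pos_part (G i w - g i)
                                  + dgm i * neg_part (G i w - g i)))
   + (\<Sum>j\<in>Ds. expect Om p (\<lambda>w. - ad j * D j w + ddp j * neg_part (D j w - d j)
                                  + ddm j * pos_part (D j w - d j)))"

definition lagrangian ::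
  "'g set \<Rightarrow> 'd set \<Rightarrow> 'w set \<Rightarrow> ('w \<Rightarrow> real) \<Rightarrow>
   ('g \<Rightarrow> real) \<Rightarrow> ('g \<Rightarrow> real) \<Rightarrow> ('g \<Rightarrow> real) \<Rightarrow>
   ('d \<Rightarrow> real) \<Rightarrow> ('d \<Rightarrow> real) \<Rightarrow> ('d \<Rightarrow> real) \<Rightarrow> real \<Rightarrow> ('w \<Rightarrow> real) \<Rightarrow>
   ('g \<Rightarrow> real) \<Rightarrow> ('d \<Rightarrow> real) \<Rightarrow> ('g \<Rightarrow> 'w \<Rightarrow> real) \<Rightarrow> ('d \<Rightarrow> 'w \<Rightarrow> real) \<Rightarrow> real" where
  "lagrangian Gs Ds Om p ag dgp dgm ad ddp ddm piDA PiRT g d G D =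
     objective Gs Ds Om p ag dgp dgm ad ddp ddm g d G D
     - piDA * ((\<Sum>i\<in>Gs. g i) - (\<Sum>j\<in>Ds. d j))
     - expect Om p (\<lambda>w. PiRT w * ((\<Sum>i\<in>Gs. G i w - g i) - (\<Sum>j\<in>Ds. D j w - d j)))"

definition bounds_ok ::
  "'g set \<Rightarrow> 'd set \<Rightarrow> 'w set \<Rightarrow> ('g \<Rightarrow> 'w \<Rightarrow> real) \<Rightarrow> ('d \<Rightarrow> 'w \<Rightarrow> real) \<Rightarrow>
   ('g \<Rightarrow> 'w \<Rightarrow> real) \<Rightarrow> ('d \<Rightarrow> 'w \<Rightarrow> real) \<Rightarrow> bool" where
  "bounds_ok Gs Ds Om Gbar Dbar G D \<longleftrightarrow>
     (\<forall>i\<in>Gs. \<forall>w\<in>Om. 0 \<le> G i w \<and> G i w \<le> Gbar i w) \<and>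
     (\<forall>j\<in>Ds. \<forall>w\<in>Om. 0 \<le> D j w \<and> D j w \<le> Dbar j w)"

definition feasible ::
  "'g set \<Rightarrow> 'd set \<Rightarrow> 'w set \<Rightarrow> ('g \<Rightarrow> 'w \<Rightarrow> real) \<Rightarrow> ('d \<Rightarrow> 'w \<Rightarrow> real) \<Rightarrow>
   ('g \<Rightarrow> real) \<Rightarrow> ('d \<Rightarrow> real) \<Rightarrow> ('g \<Rightarrow> 'w \<Rightarrow> real) \<Rightarrow> ('d \<Rightarrow> 'w \<Rightarrow> real) \<Rightarrow> bool" where
  "feasible Gs Ds Om Gbar Dbar g d G D \<longleftrightarrow>
     (\<Sum>i\<in>Gs. g i) = (\<Sum>j\<in>Ds. d j) \<and>
     (\<forall>w\<in>Om. (\<Sum>i\<in>Gs. G i w - g i) = (\<Sum>j\<in>Ds. D j w - d j)) \<and>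
     bounds_ok Gs Ds Om Gbar Dbar G D"

definition optimal_with_prices where
  "optimal_with_prices Gs Ds Om p ag dgp dgm ad ddp ddm Gbar Dbar piDA PiRT g d G D \<longleftrightarrow>
     feasible Gs Ds Om Gbar Dbar g d G D \<and>
     (\<forall>g' d' G' D'. bounds_ok Gs Ds Om Gbar Dbar G' D' \<longrightarrow>
        lagrangian Gs Ds Om p ag dgp dgm ad ddp ddm piDA PiRT g d G D
        \<le> lagrangian Gs Ds Om p ag dgp dgm ad ddp ddm piDA PiRT g' d' G' D')"

end

theory Submission
  imports Defs
begin

text \<open>Only the day-ahead quantities need to be perturbed.  The partial Lagrangian is
  separable in them: raising a single supplier's offer g i by t changes it by the change of
  that supplier's expected deviation penalty minus (\<pi> - E[\<Pi>]) t, and raising a consumer's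
  bid changes it by the penalty change plus (\<pi> - E[\<Pi>]) t.  A deviation penalty grows by at
  most the shortfall rate times t when its reference is raised by t, and by at most the surplus
  rate times t when it is lowered.  Optimality against the shifts t = 1 and t = -1 thus bounds
  the price distortion by each incremental bid price, hence by their minima.\<close>

definition deviation_penalty :: "real \<Rightarrow> real \<Rightarrow> real \<Rightarrow> real" where
  "deviation_penalty up down z = up * pos_part z + down * neg_part z"

lemma deviation_penalty_diff_le:
  assumes "0 \<le> up" "0 \<le> down" "0 \<le> t"
  shows "deviation_penalty up down (z - t) \<le> deviation_penalty up down z + down * t"
    and "deviation_penalty up down (z + t) \<le> deviation_penalty up down z + up * t"
proof -
  have "pos_part (z - t) \<le> pos_part z" "neg_part (z - t) \<le> neg_part z + t"
    "pos_part (z + t) \<le> pos_part z + t" "neg_part (z + t) \<le> neg_part z"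
    using assms(3) unfolding pos_part_def neg_part_def by auto
  then show "deviation_penalty up down (z - t) \<le> deviation_penalty up down z + down * t"
    and "deviation_penalty up down (z + t) \<le> deviation_penalty up down z + up * t"
    using assms(1,2) unfolding deviation_penalty_def
    by (smt (verit, best) distrib_left mult_left_mono)+
qed

lemma expect_le_expect_plus:
  assumes "\<forall>w\<in>Om. p w \<ge> 0" "(\<Sum>w\<in>Om. p w) = 1" "\<forall>w\<in>Om. X w \<le> Y w + c"
  shows "expect Om p X \<le> expect Om p Y + c"
proof -
  have "expect Om p X \<le> (\<Sum>w\<in>Om. p w * (Y w + c))"
    unfolding expect_def using assms(1,3) by (intro sum_mono mult_left_mono) auto
  also have "\<dots> = expect Om p Y + c"
    using assms(2) by (simp add: expect_def distrib_left sum.distrib flip: sum_distrib_right)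
  finally show ?thesis .
qed

lemma sum_fun_upd_shift:
  fixes f :: "'a \<Rightarrow> real \<Rightarrow> real"
  assumes "finite A" "i \<in> A"
  shows "(\<Sum>k\<in>A. f k ((x(i := x i + t)) k)) = (\<Sum>k\<in>A. f k (x k)) + f i (x i + t) - f i (x i)"
proof -
  have "(\<Sum>k\<in>A - {i}. f k ((x(i := x i + t)) k)) = (\<Sum>k\<in>A - {i}. f k (x k))"
    by (intro sum.cong) auto
  then show ?thesis
    using assms by (simp add: sum.remove)
qed

lemma objective_deviation_penalty:
  "objective Gs Ds Om p ag dgp dgm ad ddp ddm g d G D =
     (\<Sum>i\<in>Gs. expect Om p (\<lambda>w. ag i * G i w + deviation_penalty (dgp i) (dgm i) (G i w - g i)))
   + (\<Sum>j\<in>Ds. expect Om p (\<lambda>w. - ad j * D j w + deviation_penalty (ddm j) (ddp j) (D j w - d j)))"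
  unfolding objective_def deviation_penalty_def by (simp add: algebra_simps)

lemma expect_mult_diff_const:
  "expect Om p (\<lambda>w. P w * (S w - t)) = expect Om p (\<lambda>w. P w * S w) - t * expect Om p P"
  unfolding expect_def by (simp add: algebra_simps sum_subtractf sum_distrib_left)

lemma lagrangian_shift_supplier:
  assumes "finite Gs" "i \<in> Gs"
  shows "lagrangian Gs Ds Om p ag dgp dgm ad ddp ddm piDA PiRT (g(i := g i + t)) d G D
       = lagrangian Gs Ds Om p ag dgp dgm ad ddp ddm piDA PiRT g d G D
         + expect Om p (\<lambda>w. deviation_penalty (dgp i) (dgm i) (G i w - (g i + t)))
         - expect Om p (\<lambda>w. deviation_penalty (dgp i) (dgm i) (G i w - g i))
         - (piDA - expect Om p PiRT) * t"
proof -
  let ?g' = "g(i := g i + t)"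
  let ?cost = "\<lambda>i x w. ag i * G i w + deviation_penalty (dgp i) (dgm i) (G i w - x)"
  have cost: "(\<Sum>k\<in>Gs. expect Om p (?cost k (?g' k)))
      = (\<Sum>k\<in>Gs. expect Om p (?cost k (g k))) + expect Om p (?cost i (g i + t))
        - expect Om p (?cost i (g i))"
    using sum_fun_upd_shift[OF assms, of "\<lambda>k x. expect Om p (?cost k x)"] .
  have penalty: "expect Om p (?cost i (g i + t)) - expect Om p (?cost i (g i))
      = expect Om p (\<lambda>w. deviation_penalty (dgp i) (dgm i) (G i w - (g i + t)))
        - expect Om p (\<lambda>w. deviation_penalty (dgp i) (dgm i) (G i w - g i))"
    unfolding expect_def by (simp add: distrib_left sum.distrib)
  have day_ahead: "(\<Sum>k\<in>Gs. ?g' k) = (\<Sum>k\<in>Gs. g k) + t"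
    using sum_fun_upd_shift[OF assms, of "\<lambda>k x. x"] by simp
  have shifted: "(\<Sum>k\<in>Gs. G k w - ?g' k) - R w = ((\<Sum>k\<in>Gs. G k w - g k) - R w) - t" for R w
    using sum_fun_upd_shift[OF assms, of "\<lambda>k x. G k w - x"] by simp
  have real_time: "expect Om p (\<lambda>w. PiRT w * ((\<Sum>k\<in>Gs. G k w - ?g' k) - R w))
      = expect Om p (\<lambda>w. PiRT w * ((\<Sum>k\<in>Gs. G k w - g k) - R w)) - t * expect Om p PiRT"
    for R unfolding shifted by (rule expect_mult_diff_const)
  show ?thesis
    unfolding lagrangian_def objective_deviation_penalty cost day_ahead real_time
    using penalty by (simp add: algebra_simps)
qed

lemma lagrangian_shift_consumer:
  assumes "finite Ds" "j \<in> Ds"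
  shows "lagrangian Gs Ds Om p ag dgp dgm ad ddp ddm piDA PiRT g (d(j := d j + t)) G D
       = lagrangian Gs Ds Om p ag dgp dgm ad ddp ddm piDA PiRT g d G D
         + expect Om p (\<lambda>w. deviation_penalty (ddm j) (ddp j) (D j w - (d j + t)))
         - expect Om p (\<lambda>w. deviation_penalty (ddm j) (ddp j) (D j w - d j))
         + (piDA - expect Om p PiRT) * t"
proof -
  let ?d' = "d(j := d j + t)"
  let ?cost = "\<lambda>j x w. - ad j * D j w + deviation_penalty (ddm j) (ddp j) (D j w - x)"
  have cost: "(\<Sum>k\<in>Ds. expect Om p (?cost k (?d' k)))
      = (\<Sum>k\<in>Ds. expect Om p (?cost k (d k))) + expect Om p (?cost j (d j + t))
        - expect Om p (?cost j (d j))"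
    using sum_fun_upd_shift[OF assms, of "\<lambda>k x. expect Om p (?cost k x)"] .
  have penalty: "expect Om p (?cost j (d j + t)) - expect Om p (?cost j (d j))
      = expect Om p (\<lambda>w. deviation_penalty (ddm j) (ddp j) (D j w - (d j + t)))
        - expect Om p (\<lambda>w. deviation_penalty (ddm j) (ddp j) (D j w - d j))"
    unfolding expect_def by (simp add: algebra_simps sum.distrib sum_subtractf)
  have day_ahead: "(\<Sum>k\<in>Ds. ?d' k) = (\<Sum>k\<in>Ds. d k) + t"
    using sum_fun_upd_shift[OF assms, of "\<lambda>k x. x"] by simp
  have shifted: "S w - (\<Sum>k\<in>Ds. D k w - ?d' k) = (S w - (\<Sum>k\<in>Ds. D k w - d k)) - (- t)"
    for S w
    using sum_fun_upd_shift[OF assms, of "\<lambda>k x. D k w - x"] by simp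
  have real_time: "expect Om p (\<lambda>w. PiRT w * (S w - (\<Sum>k\<in>Ds. D k w - ?d' k)))
      = expect Om p (\<lambda>w. PiRT w * (S w - (\<Sum>k\<in>Ds. D k w - d k))) + t * expect Om p PiRT"
    for S unfolding shifted expect_mult_diff_const by simp
  show ?thesis
    unfolding lagrangian_def objective_deviation_penalty cost day_ahead real_time
    using penalty by (simp add: algebra_simps)
qed

lemma optimal_with_prices_day_ahead_le:
  assumes "optimal_with_prices Gs Ds Om p ag dgp dgm ad ddp ddm Gbar Dbar piDA PiRT g d G D"
  shows "lagrangian Gs Ds Om p ag dgp dgm ad ddp ddm piDA PiRT g d G D
       \<le> lagrangian Gs Ds Om p ag dgp dgm ad ddp ddm piDA PiRT g' d' G D"
  using assms unfolding optimal_with_prices_def feasible_def by blast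

lemma price_distortion_bounds_supplier:
  assumes opt: "optimal_with_prices Gs Ds Om p ag dgp dgm ad ddp ddm Gbar Dbar piDA PiRT g d G D"
    and "finite Gs" "i \<in> Gs" "\<forall>w\<in>Om. p w \<ge> 0" "(\<Sum>w\<in>Om. p w) = 1"
    and "0 \<le> dgp i" "0 \<le> dgm i"
  shows "- dgp i \<le> piDA - expect Om p PiRT" and "piDA - expect Om p PiRT \<le> dgm i"
proof -
  let ?pen = "\<lambda>t. expect Om p (\<lambda>w. deviation_penalty (dgp i) (dgm i) (G i w - (g i + t)))"
  have shift_ge: "0 \<le> ?pen t - ?pen 0 - (piDA - expect Om p PiRT) * t" for t
    using optimal_with_prices_day_ahead_le[OF opt, of "g(i := g i + t)" d]
      lagrangian_shift_supplier[OF assms(2,3), of Ds Om p ag dgp dgm ad ddp ddm piDA PiRT g t d G D]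
    by simp
  note penalty_step = deviation_penalty_diff_le[OF assms(6,7), of 1 "G i w - g i" for w]
  have "?pen 1 \<le> ?pen 0 + dgm i"
    by (intro expect_le_expect_plus assms(4,5) ballI) (use penalty_step in \<open>simp add: algebra_simps\<close>)
  moreover have "?pen (-1) \<le> ?pen 0 + dgp i"
    by (intro expect_le_expect_plus assms(4,5) ballI) (use penalty_step in \<open>simp add: algebra_simps\<close>)
  ultimately show "- dgp i \<le> piDA - expect Om p PiRT" and "piDA - expect Om p PiRT \<le> dgm i"
    using shift_ge[of 1] shift_ge[of "-1"] by simp_all
qed

lemma price_distortion_bounds_consumer:
  assumes opt: "optimal_with_prices Gs Ds Om p ag dgp dgm ad ddp ddm Gbar Dbar piDA PiRT g d G D"
    and "finite Ds" "j \<in> Ds" "\<forall>w\<in>Om. p w \<ge> 0" "(\<Sum>w\<in>Om. p w) = 1"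
    and "0 \<le> ddm j" "0 \<le> ddp j"
  shows "- ddp j \<le> piDA - expect Om p PiRT" and "piDA - expect Om p PiRT \<le> ddm j"
proof -
  let ?pen = "\<lambda>t. expect Om p (\<lambda>w. deviation_penalty (ddm j) (ddp j) (D j w - (d j + t)))"
  have shift_ge: "0 \<le> ?pen t - ?pen 0 + (piDA - expect Om p PiRT) * t" for t
    using optimal_with_prices_day_ahead_le[OF opt, of g "d(j := d j + t)"]
      lagrangian_shift_consumer[OF assms(2,3), of Gs Om p ag dgp dgm ad ddp ddm piDA PiRT g d t G D]
    by simp
  note penalty_step = deviation_penalty_diff_le[OF assms(6,7), of 1 "D j w - d j" for w]
  have "?pen 1 \<le> ?pen 0 + ddp j"
    by (intro expect_le_expect_plus assms(4,5) ballI) (use penalty_step in \<open>simp add: algebra_simps\<close>)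
  moreover have "?pen (-1) \<le> ?pen 0 + ddm j"
    by (intro expect_le_expect_plus assms(4,5) ballI) (use penalty_step in \<open>simp add: algebra_simps\<close>)
  ultimately show "- ddp j \<le> piDA - expect Om p PiRT" and "piDA - expect Om p PiRT \<le> ddm j"
    using shift_ge[of 1] shift_ge[of "-1"] by simp_all
qed

theorem theorem2:
  fixes Gs :: "'g set" and Ds :: "'d set" and Om :: "'w set" and p :: "'w \<Rightarrow> real"
    and ag dgp dgm :: "'g \<Rightarrow> real" and ad ddp ddm :: "'d \<Rightarrow> real"
    and Gbar :: "'g \<Rightarrow> 'w \<Rightarrow> real" and Dbar :: "'d \<Rightarrow> 'w \<Rightarrow> real"
    and piDA :: real and PiRT :: "'w \<Rightarrow> real"
    and g :: "'g \<Rightarrow> real" and d :: "'d \<Rightarrow> real"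
    and G :: "'g \<Rightarrow> 'w \<Rightarrow> real" and D :: "'d \<Rightarrow> 'w \<Rightarrow> real"
  assumes "finite Gs" "Gs \<noteq> {}" "finite Ds" "Ds \<noteq> {}" "finite Om" "Om \<noteq> {}"
    and "\<forall>w\<in>Om. p w > 0" and "(\<Sum>w\<in>Om. p w) = 1"
    and "\<forall>i\<in>Gs. ag i \<ge> 0" and "\<forall>j\<in>Ds. ad j \<ge> 0"
    and "\<forall>i\<in>Gs. \<forall>w\<in>Om. Gbar i w \<ge> 0" and "\<forall>j\<in>Ds. \<forall>w\<in>Om. Dbar j w \<ge> 0"
    and "\<forall>i\<in>Gs. dgp i > 0 \<and> dgm i > 0" and "\<forall>j\<in>Ds. ddp j > 0 \<and> ddm j > 0"
    and "optimal_with_prices Gs Ds Om p ag dgp dgm ad ddp ddm Gbar Dbar piDA PiRT g d G D"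
  shows "- min (Min (dgp ` Gs)) (Min (ddp ` Ds)) \<le> piDA - expect Om p PiRT
       \<and> piDA - expect Om p PiRT \<le> min (Min (dgm ` Gs)) (Min (ddm ` Ds))"
proof -
  let ?M = "piDA - expect Om p PiRT"
  have p_nonneg: "\<forall>w\<in>Om. p w \<ge> 0"
    using assms(7) by auto
  note supplier = price_distortion_bounds_supplier[OF assms(15,1) _ p_nonneg assms(8)]
  note consumer = price_distortion_bounds_consumer[OF assms(15,3) _ p_nonneg assms(8)]
  have "- ?M \<le> Min (dgp ` Gs)" "?M \<le> Min (dgm ` Gs)"
    using supplier assms(1,2,13) by (force intro!: Min.boundedI)+
  moreover have "- ?M \<le> Min (ddp ` Ds)" "?M \<le> Min (ddm ` Ds)"
    using consumer assms(3,4,14) by (force intro!: Min.boundedI)+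
  ultimately show ?thesis
    by linarith
qed

end
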